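(* Let $\sigma>0$, $\theta\ge0$, $\gamma\ge0$, $x>0$, and for each $N\in\mathbb N$ let $Z^{N,x}$ be the Markov jump process on $\{k/N:k\in\mathbb N_0\}$ started at $\lfloor Nx\rfloor/N$ which, from state $k/N$, jumps to $(k+1)/N$ at rate $kN\sigma^2/2+k\theta$ and to $(k-1)/N$ at rate $kN\sigma^2/2+k(k-1)\gamma/N$. Then for every $T>0$, $$\sup_{N\ge1}\sup_{0\le t\le T}\mathbb E\big[(Z^{N,x}_t)^4\big]<\infty.$$ *)

theory Defs
  imports "HOL-Analysis.Analysis"
begin

text \<open>Birth-death Markov jump process on state indices k :: nat, with birth rate b k
  (jump k -> k+1) and death rate d k (jump k -> k-1; we require d 0 = 0 in use).
  The transition function is the (Feller) minimal solution of the Kolmogorov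
  backward equations, built from the first-jump decomposition:
  bd_pn n t i j = probability that the chain started at i is at j at time t
  having made exactly n jumps by time t.\<close>

fun bd_pn :: "(nat \<Rightarrow> real) \<Rightarrow> (nat \<Rightarrow> real) \<Rightarrow> nat \<Rightarrow> real \<Rightarrow> nat \<Rightarrow> nat \<Rightarrow> ennreal" where
  "bd_pn b d 0 t i j = (if i = j then ennreal (exp (- (b i + d i) * t)) else 0)"
| "bd_pn b d (Suc n) t i j =
     (\<integral>\<^sup>+ s. indicator {0..t} s * ennreal (exp (- (b i + d i) * s)) *
        (ennreal (b i) * bd_pn b d n (t - s) (i + 1) j
         + ennreal (d i) * bd_pn b d n (t - s) (i - 1) j) \<partial>lborel)"

definition bd_p :: "(nat \<Rightarrow> real) \<Rightarrow> (nat \<Rightarrow> real) \<Rightarrow> real \<Rightarrow> nat \<Rightarrow> nat \<Rightarrow> ennreal" where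
  "bd_p b d t i j = (\<Sum>n. bd_pn b d n t i j)"

definition Z_birth :: "real \<Rightarrow> real \<Rightarrow> nat \<Rightarrow> nat \<Rightarrow> real" where
  "Z_birth \<sigma> \<theta> N k = real k * real N * \<sigma>\<^sup>2 / 2 + real k * \<theta>"

definition Z_death :: "real \<Rightarrow> real \<Rightarrow> nat \<Rightarrow> nat \<Rightarrow> real" where
  "Z_death \<sigma> \<gamma> N k = real k * real N * \<sigma>\<^sup>2 / 2 + real k * (real k - 1) * \<gamma> / real N"

definition Z_start :: "real \<Rightarrow> nat \<Rightarrow> nat" where
  "Z_start x N = nat \<lfloor>real N * x\<rfloor>"

definition Z_moment4 :: "real \<Rightarrow> real \<Rightarrow> real \<Rightarrow> real \<Rightarrow> nat \<Rightarrow> real \<Rightarrow> ennreal" where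
  "Z_moment4 \<sigma> \<theta> \<gamma> x N t =
     (\<Sum>k. ennreal ((real k / real N) ^ 4) *
            bd_p (Z_birth \<sigma> \<theta> N) (Z_death \<sigma> \<gamma> N) t (Z_start x N) k)"

end

theory Submission
  imports Defs
begin

text \<open>If a weight \<open>V \<ge> 0\<close> satisfies the drift condition \<open>(L V)(i) \<le> C V(i)\<close> for the
  generator \<open>L\<close> of a birth-death chain, then the minimal transition function satisfies
  \<open>\<Sum>\<^sub>j p\<^sub>t(i,j) V(j) \<le> exp(C t) V(i)\<close>. This is proved for the chain stopped after \<open>n\<close> jumps,
  by induction on \<open>n\<close>: in the first-jump decomposition the induction hypothesis bounds the
  contribution after the first jump, and \<open>u(t) = exp(C t) V(i)\<close> solves the renewal equation
  \<open>u(t) = exp(-q t) V(i) + \<integral>\<^sub>0\<^sup>t exp(-q s) (q + C) u(t - s) ds\<close> with \<open>q = b(i) + d(i)\<close>.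

  For \<open>Z\<^sup>N\<^sup>,\<^sup>x\<close> take \<open>V(k) = (k/N)\<^sup>4 + 1\<close>. With \<open>z = k/N\<close>, the symmetric part of the rates
  contributes \<open>\<sigma>\<^sup>2 (6 z\<^sup>3 + z/N\<^sup>2)\<close>, the \<open>\<theta>\<close>-births contribute \<open>O(z\<^sup>4 + 1)\<close>, and the
  quadratic deaths only decrease \<open>V\<close>; so \<open>C = 8 \<sigma>\<^sup>2 + 16 \<theta>\<close> works for every \<open>N\<close>, and the
  fourth moment is at most \<open>exp(C T) (x\<^sup>4 + 1)\<close>.\<close>

(* At i = 0 the truncated subtraction i - 1 = 0 makes the death term vanish. *)
definition bd_generator :: "(nat \<Rightarrow> real) \<Rightarrow> (nat \<Rightarrow> real) \<Rightarrow> (nat \<Rightarrow> real) \<Rightarrow> nat \<Rightarrow> real" where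
  "bd_generator b d V i = b i * (V (i + 1) - V i) + d i * (V (i - 1) - V i)"

lemma ennreal_mult_add_le:
  assumes "a \<ge> 0" "c \<ge> 0" "x \<ge> 0" "y \<ge> 0" "X \<le> ennreal x" "Y \<le> ennreal y"
  shows "ennreal a * X + ennreal c * Y \<le> ennreal (a * x + c * y)"
proof -
  have "ennreal a * X + ennreal c * Y \<le> ennreal a * ennreal x + ennreal c * ennreal y"
    using assms by (intro add_mono mult_left_mono) auto
  also have "\<dots> = ennreal (a * x + c * y)"
    using assms by (simp add: ennreal_mult' ennreal_plus)
  finally show ?thesis .
qed

lemma exp_renewal_equation:
  fixes q C A t :: real
  assumes "q \<ge> 0" "C \<ge> 0" "A \<ge> 0" "t \<ge> 0"
  shows "ennreal (exp (- q * t) * A) +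
      (\<integral>\<^sup>+ s. ennreal (exp (- q * s) * ((q + C) * (exp (C * (t - s)) * A))) * indicator {0..t} s \<partial>lborel)
    = ennreal (exp (C * t) * A)"
proof -
  let ?F = "\<lambda>s. - (exp (C * t) * A * exp (- (q + C) * s))"
  let ?f = "\<lambda>s. exp (- q * s) * ((q + C) * (exp (C * (t - s)) * A))"
  have f_eq: "?f s = exp (C * t) * A * ((q + C) * exp (- (q + C) * s))" for s
    by (simp add: algebra_simps flip: exp_add)
  have "(?f has_integral (?F t - ?F 0)) {0..t}"
  proof (rule fundamental_theorem_of_calculus[OF \<open>t \<ge> 0\<close>])
    fix s
    have "(?F has_real_derivative ?f s) (at s within {0..t})"
      unfolding f_eq by (auto intro!: derivative_eq_intros simp: algebra_simps)
    then show "(?F has_vector_derivative ?f s) (at s within {0..t})"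
      by (simp add: has_real_derivative_iff_has_vector_derivative)
  qed
  also have "?F t - ?F 0 = exp (C * t) * A - exp (- q * t) * A"
    by (simp add: algebra_simps flip: exp_add)
  finally have "(?f has_integral exp (C * t) * A - exp (- q * t) * A) {0..t}" .
  then have "(\<integral>\<^sup>+ s. ennreal (?f s) * indicator {0..t} s \<partial>lborel) =
      ennreal (exp (C * t) * A - exp (- q * t) * A)"
    by (intro nn_integral_has_integral_lebesgue') (use assms in auto)
  moreover have "exp (- q * t) * A \<le> exp (C * t) * A"
    using assms by (intro mult_right_mono) (auto intro: order.trans[of _ 0])
  ultimately show ?thesis
    using assms by (simp flip: ennreal_plus)
qed

lemma bd_pn_measurable[measurable]: "(\<lambda>t. bd_pn b d n t i j) \<in> borel_measurable borel"
proof (induction n arbitrary: i j)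
  case 0
  then show ?case by simp
next
  case (Suc n)
  note [measurable] = Suc
  have [measurable]: "Measurable.pred (borel \<Otimes>\<^sub>M borel) (\<lambda>p::real \<times> real. snd p \<in> {0..fst p})"
    unfolding atLeastAtMost_iff by measurable
  have "(\<lambda>(t, s). indicator {0..t} s * ennreal (exp (- (b i + d i) * s)) *
        (ennreal (b i) * bd_pn b d n (t - s) (i + 1) j
         + ennreal (d i) * bd_pn b d n (t - s) (i - 1) j)) \<in> borel_measurable (borel \<Otimes>\<^sub>M borel)"
    by measurable
  then show ?case
    by (simp add: lborel.borel_measurable_nn_integral
        measurable_cong_sets[OF sets_pair_measure_cong[OF refl sets_lborel] refl])
qed

lemma bd_pn_sum_lessThan_Suc:
  "(\<Sum>m<Suc n. bd_pn b d m t i j) = bd_pn b d 0 t i j +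
     (\<integral>\<^sup>+ s. indicator {0..t} s * ennreal (exp (- (b i + d i) * s)) *
        (ennreal (b i) * (\<Sum>m<n. bd_pn b d m (t - s) (i + 1) j)
         + ennreal (d i) * (\<Sum>m<n. bd_pn b d m (t - s) (i - 1) j)) \<partial>lborel)"
proof -
  have "(\<Sum>m<n. bd_pn b d (Suc m) t i j) =
     (\<integral>\<^sup>+ s. (\<Sum>m<n. indicator {0..t} s * ennreal (exp (- (b i + d i) * s)) *
        (ennreal (b i) * bd_pn b d m (t - s) (i + 1) j
         + ennreal (d i) * bd_pn b d m (t - s) (i - 1) j)) \<partial>lborel)"
    by (simp add: nn_integral_sum)
  also have "\<dots> = (\<integral>\<^sup>+ s. indicator {0..t} s * ennreal (exp (- (b i + d i) * s)) *
        (ennreal (b i) * (\<Sum>m<n. bd_pn b d m (t - s) (i + 1) j)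
         + ennreal (d i) * (\<Sum>m<n. bd_pn b d m (t - s) (i - 1) j)) \<partial>lborel)"
    by (simp add: sum_distrib_left sum.distrib distrib_left)
  finally show ?thesis
    by (simp only: sum.lessThan_Suc_shift)
qed

lemma bd_pn_0_weighted_sum:
  "(\<Sum>j. bd_pn b d 0 t i j * ennreal (V j)) = ennreal (exp (- (b i + d i) * t)) * ennreal (V i)"
proof -
  have "(\<lambda>j. bd_pn b d 0 t i j * ennreal (V j)) =
      (\<lambda>j. if j = i then ennreal (exp (- (b i + d i) * t)) * ennreal (V i) else 0)"
    by (auto simp: fun_eq_iff)
  then show ?thesis
    using sums_unique[OF sums_single[of i "\<lambda>_. ennreal (exp (- (b i + d i) * t)) * ennreal (V i)"]]
    by simp
qed

lemma bd_pn_partial_sum_lyapunov_bound: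
  fixes b d V :: "nat \<Rightarrow> real" and C :: real
  assumes b: "\<And>i. b i \<ge> 0" and d: "\<And>i. d i \<ge> 0" and V: "\<And>i. V i \<ge> 0" and C: "C \<ge> 0"
    and drift: "\<And>i. bd_generator b d V i \<le> C * V i"
  shows "t \<ge> 0 \<Longrightarrow> (\<Sum>j. (\<Sum>m<n. bd_pn b d m t i j) * ennreal (V j)) \<le> ennreal (exp (C * t) * V i)"
proof (induction n arbitrary: t i)
  case 0
  then show ?case by simp
next
  case (Suc n)
  define q where "q = b i + d i"
  define P where "P \<tau> k j = (\<Sum>m<n. bd_pn b d m \<tau> k j)" for \<tau> k j
  define S where "S \<tau> k = (\<Sum>j. P \<tau> k j * ennreal (V j))" for \<tau> k
  define G where "G j s = indicator {0..t} s * ennreal (exp (- q * s)) *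
       (ennreal (b i) * P (t - s) (i + 1) j + ennreal (d i) * P (t - s) (i - 1) j)" for j s
  have [measurable]: "G j \<in> borel_measurable lborel" for j
    unfolding G_def P_def by measurable
  have G_sum: "(\<Sum>j. G j s * ennreal (V j)) = indicator {0..t} s * ennreal (exp (- q * s)) *
      (ennreal (b i) * S (t - s) (i + 1) + ennreal (d i) * S (t - s) (i - 1))" for s
    unfolding G_def S_def
    by (simp add: distrib_left distrib_right mult.assoc suminf_add[OF summableI summableI, symmetric]
        ennreal_suminf_cmult)
  have G_bound: "(\<Sum>j. G j s * ennreal (V j)) \<le>
      ennreal (exp (- q * s) * ((q + C) * (exp (C * (t - s)) * V i))) * indicator {0..t} s" for s
  proof (cases "s \<in> {0..t}")
    case True
    let ?E = "exp (C * (t - s))"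
    have "S (t - s) k \<le> ennreal (?E * V k)" for k
      unfolding S_def P_def using True by (intro Suc.IH) simp
    then have "ennreal (b i) * S (t - s) (i + 1) + ennreal (d i) * S (t - s) (i - 1) \<le>
        ennreal (b i * (?E * V (i + 1)) + d i * (?E * V (i - 1)))"
      using b d V by (intro ennreal_mult_add_le) auto
    also have "\<dots> \<le> ennreal ((q + C) * (?E * V i))"
    proof (intro ennreal_leI)
      have "b i * V (i + 1) + d i * V (i - 1) \<le> (q + C) * V i"
        using drift[of i] by (simp add: bd_generator_def q_def algebra_simps)
      then have "?E * (b i * V (i + 1) + d i * V (i - 1)) \<le> ?E * ((q + C) * V i)"
        by (rule mult_left_mono) simp
      then show "b i * (?E * V (i + 1)) + d i * (?E * V (i - 1)) \<le> (q + C) * (?E * V i)"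
        by (simp add: algebra_simps)
    qed
    finally show ?thesis
      using True by (simp add: G_sum ennreal_mult' mult.assoc mult_left_mono)
  qed (simp add: G_def)
  have "(\<Sum>j. (\<Sum>m<Suc n. bd_pn b d m t i j) * ennreal (V j)) =
      (\<Sum>j. bd_pn b d 0 t i j * ennreal (V j) + integral\<^sup>N lborel (G j) * ennreal (V j))"
    unfolding bd_pn_sum_lessThan_Suc distrib_right G_def P_def q_def ..
  also have "\<dots> = ennreal (exp (- q * t) * V i) + (\<Sum>j. integral\<^sup>N lborel (G j) * ennreal (V j))"
    by (simp only: suminf_add[OF summableI summableI, symmetric] bd_pn_0_weighted_sum q_def
        ennreal_mult''[OF V])
  also have "\<dots> = ennreal (exp (- q * t) * V i) + (\<integral>\<^sup>+ s. (\<Sum>j. G j s * ennreal (V j)) \<partial>lborel)"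
    by (simp add: nn_integral_suminf nn_integral_multc)
  also have "\<dots> \<le> ennreal (exp (- q * t) * V i) +
      (\<integral>\<^sup>+ s. ennreal (exp (- q * s) * ((q + C) * (exp (C * (t - s)) * V i))) * indicator {0..t} s \<partial>lborel)"
    by (intro add_left_mono nn_integral_mono G_bound)
  also have "\<dots> = ennreal (exp (C * t) * V i)"
    using b d V C Suc.prems by (intro exp_renewal_equation) (auto simp: q_def)
  finally show ?case .
qed

lemma bd_p_lyapunov_bound:
  fixes b d V :: "nat \<Rightarrow> real" and C :: real
  assumes "\<And>i. b i \<ge> 0" "\<And>i. d i \<ge> 0" "\<And>i. V i \<ge> 0" "C \<ge> 0"
    and "\<And>i. bd_generator b d V i \<le> C * V i" and "t \<ge> 0"
  shows "(\<Sum>j. bd_p b d t i j * ennreal (V j)) \<le> ennreal (exp (C * t) * V i)"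
proof -
  have "(\<Sum>j. bd_p b d t i j * ennreal (V j)) = (\<Sum>j. SUP n. (\<Sum>m<n. bd_pn b d m t i j) * ennreal (V j))"
    unfolding bd_p_def suminf_eq_SUP SUP_mult_right_ennreal ..
  also have "\<dots> = (SUP n. \<Sum>j. (\<Sum>m<n. bd_pn b d m t i j) * ennreal (V j))"
    by (intro ennreal_suminf_SUP_eq incseq_SucI mult_right_mono) auto
  also have "\<dots> \<le> ennreal (exp (C * t) * V i)"
    using assms by (intro SUP_least bd_pn_partial_sum_lyapunov_bound)
  finally show ?thesis .
qed

lemma Z_rates_nonneg:
  assumes "\<theta> \<ge> 0" "\<gamma> \<ge> 0"
  shows "Z_birth \<sigma> \<theta> N k \<ge> 0" "Z_death \<sigma> \<gamma> N k \<ge> 0"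
proof -
  show "Z_birth \<sigma> \<theta> N k \<ge> 0"
    using assms by (simp add: Z_birth_def)
  have "real k * (real k - 1) \<ge> 0"
    by (cases k) auto
  then show "Z_death \<sigma> \<gamma> N k \<ge> 0"
    using assms by (simp add: Z_death_def)
qed

lemma quartic_moment_bounds:
  fixes z u :: real
  assumes "z \<ge> 0" "u \<ge> 0" "u \<le> 1"
  shows "6 * z ^ 3 + z * u\<^sup>2 \<le> 8 * (z ^ 4 + 1)"
    and "4 * z ^ 4 + 6 * z ^ 3 * u + 4 * z\<^sup>2 * u\<^sup>2 + z * u ^ 3 \<le> 16 * (z ^ 4 + 1)"
proof -
  have pow_le: "z ^ j \<le> z ^ 4 + 1" if "j \<le> 4" for j
  proof (cases "z \<le> 1")
    case True
    then have "z ^ j \<le> 1" using assms(1) by (simp add: power_le_one)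
    then show ?thesis using assms(1) by (smt (verit) zero_le_power)
  next
    case False
    then show ?thesis using that by (smt (verit) power_increasing)
  qed
  have u_pows: "u\<^sup>2 \<le> 1" "u ^ 3 \<le> 1" using assms by (auto intro: power_le_one)
  have "z * u\<^sup>2 \<le> z" "z ^ 3 * u \<le> z ^ 3" "z\<^sup>2 * u\<^sup>2 \<le> z\<^sup>2" "z * u ^ 3 \<le> z"
    using assms u_pows by (auto intro!: mult_left_le)
  then show "6 * z ^ 3 + z * u\<^sup>2 \<le> 8 * (z ^ 4 + 1)"
    and "4 * z ^ 4 + 6 * z ^ 3 * u + 4 * z\<^sup>2 * u\<^sup>2 + z * u ^ 3 \<le> 16 * (z ^ 4 + 1)"
    using pow_le[of 1] pow_le[of 2] pow_le[of 3] zero_le_power[of z 4] assms(1) by auto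
qed

lemma Z_generator_quartic_eq:
  fixes \<sigma> \<theta> \<gamma> :: real and N k :: nat
  assumes "N \<ge> 1" "k \<ge> 1"
  defines "z \<equiv> real k / real N" and "u \<equiv> 1 / real N"
  shows "bd_generator (Z_birth \<sigma> \<theta> N) (Z_death \<sigma> \<gamma> N) (\<lambda>j. (real j / real N) ^ 4 + 1) k =
    \<sigma>\<^sup>2 * (6 * z ^ 3 + z * u\<^sup>2) + \<theta> * (4 * z ^ 4 + 6 * z ^ 3 * u + 4 * z\<^sup>2 * u\<^sup>2 + z * u ^ 3)
    + \<gamma> * real N * z * (z - u) * ((z - u) ^ 4 - z ^ 4)"
  using assms
  by (simp add: bd_generator_def Z_birth_def Z_death_def of_nat_diff field_simps
      power2_eq_square power3_eq_cube power4_eq_xxxx)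

lemma Z_generator_quartic_le:
  fixes \<sigma> \<theta> \<gamma> :: real and N k :: nat
  assumes "\<theta> \<ge> 0" "\<gamma> \<ge> 0" "N \<ge> 1"
  defines "V \<equiv> \<lambda>k. (real k / real N) ^ 4 + 1"
  shows "bd_generator (Z_birth \<sigma> \<theta> N) (Z_death \<sigma> \<gamma> N) V k \<le> (8 * \<sigma>\<^sup>2 + 16 * \<theta>) * V k"
proof (cases "k = 0")
  case True
  then show ?thesis
    using assms by (simp add: bd_generator_def Z_birth_def Z_death_def V_def)
next
  case False
  define z where "z = real k / real N"
  define u where "u = 1 / real N"
  have u: "u \<ge> 0" "u \<le> 1"
    using assms by (auto simp: u_def)
  have z_minus_u: "z - u \<ge> 0"
    using False by (simp add: z_def u_def divide_right_mono)
  have "\<gamma> * real N * z * (z - u) * ((z - u) ^ 4 - z ^ 4) \<le> 0"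
    using assms u z_minus_u
    by (intro mult_nonneg_nonpos mult_nonneg_nonneg) (auto intro: power_mono)
  moreover have "\<sigma>\<^sup>2 * (6 * z ^ 3 + z * u\<^sup>2) \<le> \<sigma>\<^sup>2 * (8 * (z ^ 4 + 1))"
    using quartic_moment_bounds(1)[OF _ u] z_minus_u u by (intro mult_left_mono) auto
  moreover have "\<theta> * (4 * z ^ 4 + 6 * z ^ 3 * u + 4 * z\<^sup>2 * u\<^sup>2 + z * u ^ 3) \<le> \<theta> * (16 * (z ^ 4 + 1))"
    using quartic_moment_bounds(2)[OF _ u] z_minus_u u assms(1) by (intro mult_left_mono) auto
  ultimately show ?thesis
    using Z_generator_quartic_eq[OF \<open>N \<ge> 1\<close>, of k \<sigma> \<theta> \<gamma>] False
    unfolding V_def z_def u_def by (simp add: algebra_simps)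
qed

lemma Z_start_div_le:
  assumes "x \<ge> 0"
  shows "real (Z_start x N) / real N \<le> x"
proof (cases "N = 0")
  case False
  have "real (Z_start x N) \<le> real N * x"
    using assms by (simp add: Z_start_def)
  then show ?thesis
    using False by (simp add: divide_le_eq mult.commute)
qed (simp add: assms)

lemma Z_moment4_le:
  assumes "\<theta> \<ge> 0" "\<gamma> \<ge> 0" "x \<ge> 0" "N \<ge> 1" "t \<ge> 0"
  shows "Z_moment4 \<sigma> \<theta> \<gamma> x N t \<le> ennreal (exp ((8 * \<sigma>\<^sup>2 + 16 * \<theta>) * t) * (x ^ 4 + 1))"
proof -
  define V where "V = (\<lambda>k. (real k / real N) ^ 4 + 1)"
  let ?p = "bd_p (Z_birth \<sigma> \<theta> N) (Z_death \<sigma> \<gamma> N) t (Z_start x N)"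
  have "Z_moment4 \<sigma> \<theta> \<gamma> x N t \<le> (\<Sum>k. ?p k * ennreal (V k))"
    unfolding Z_moment4_def
  proof (intro suminf_le summableI)
    show "ennreal ((real k / real N) ^ 4) * ?p k \<le> ?p k * ennreal (V k)" for k
      by (subst mult.commute) (intro mult_left_mono ennreal_leI; simp add: V_def)
  qed
  also have "\<dots> \<le> ennreal (exp ((8 * \<sigma>\<^sup>2 + 16 * \<theta>) * t) * V (Z_start x N))"
  proof (rule bd_p_lyapunov_bound)
    show "V k \<ge> 0" for k
      by (simp add: V_def)
    show "bd_generator (Z_birth \<sigma> \<theta> N) (Z_death \<sigma> \<gamma> N) V k \<le> (8 * \<sigma>\<^sup>2 + 16 * \<theta>) * V k" for k
      unfolding V_def using assms(1,2,4) by (rule Z_generator_quartic_le)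
  qed (use assms Z_rates_nonneg in auto)
  also have "\<dots> \<le> ennreal (exp ((8 * \<sigma>\<^sup>2 + 16 * \<theta>) * t) * (x ^ 4 + 1))"
    using Z_start_div_le[OF \<open>x \<ge> 0\<close>, of N]
    by (intro ennreal_leI mult_left_mono) (auto simp: V_def intro: power_mono)
  finally show ?thesis .
qed

theorem lemma5:
  fixes \<sigma> \<theta> \<gamma> x T :: real
  assumes "\<sigma> > 0" and "\<theta> \<ge> 0" and "\<gamma> \<ge> 0" and "x > 0" and "T > 0"
  shows "(SUP N \<in> {1::nat..}. SUP t \<in> {0..T}. Z_moment4 \<sigma> \<theta> \<gamma> x N t) < \<infinity>"
proof -
  define C where "C = 8 * \<sigma>\<^sup>2 + 16 * \<theta>"
  have "Z_moment4 \<sigma> \<theta> \<gamma> x N t \<le> ennreal (exp (C * T) * (x ^ 4 + 1))"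
    if "N \<ge> 1" "t \<in> {0..T}" for N t
  proof -
    have "Z_moment4 \<sigma> \<theta> \<gamma> x N t \<le> ennreal (exp (C * t) * (x ^ 4 + 1))"
      unfolding C_def using assms that by (intro Z_moment4_le) auto
    also have "\<dots> \<le> ennreal (exp (C * T) * (x ^ 4 + 1))"
    proof (intro ennreal_leI mult_right_mono)
      show "exp (C * t) \<le> exp (C * T)"
        using assms that by (simp add: C_def mult_left_mono)
    qed (simp add: add_nonneg_nonneg)
    finally show ?thesis .
  qed
  then have "(SUP N \<in> {1::nat..}. SUP t \<in> {0..T}. Z_moment4 \<sigma> \<theta> \<gamma> x N t) \<le>
      ennreal (exp (C * T) * (x ^ 4 + 1))"
    by (intro SUP_least) auto
  also have "\<dots> < \<infinity>"
    by simp
  finally show ?thesis .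
qed

end
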